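(* Let $x_*$ be a feasible point of problem $(\mathcal{P})$. If $$\max_{\omega\in W(x_* )}\langle\nabla_x f(x_*,\omega),h\rangle>0\quad\text{for all } h\in T_A(x_* )\setminus\{0\}\text{ with } DG(x_* )h\in T_K(G(x_* )),\qquad(\ast)$$ then the first order growth condition holds at $x_*$. Conversely, if the first order growth condition and Robinson's constraint qualification hold at $x_*$, then $(\ast)$ is valid.
   Context: Standing setting: $A\subseteq\mathbb{R}^d$ is a nonempty closed convex set; $Y$ is a real Banach space with dual $Y^*$ and pairing $\langle\cdot,\cdot\rangle$ (also the Euclidean inner product on $\mathbb{R}^d$, with Euclidean norm $|\cdot|$); $K\subset Y$ is a nonempty closed convex cone; $W$ is a compact Hausdorff space; $f:\mathbb{R}^d\times W\to\mathbb{R}$ is differentiable in $x$ for each $\omega$, with $f$ and $\nabla_xf$ jointly continuous; $G:\mathbb{R}^d\to Y$ is continuously Fréchet differentiable. $F(x)=\max_{\omega\in W}f(x,\omega)$, $W(x)=\{\omega: f(x,\omega)=F(x)\}$. Problem $(\mathcal{P})$: minimise $F(x)$ subject to $G(x)\in K$, $x\in A$; its feasible set is $\Omega=\{x\in A:G(x)\in K\}$. The contingent cone $T_C(x)$ to $C$ at $x\in C$ is the set of $h$ such that there exist $\alpha_n\downarrow0$ ($\alpha_n>0$) and $h_n\to h$ with $x+\alpha_nh_n\in C$. Robinson's constraint qualification holds at feasible $x_*$ if $0\in\operatorname{int}\{G(x_* )+DG(x_* )(A-x_* )-K\}$. The first order growth condition holds at a feasible $x_*$ if there exist $\rho>0$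 and a neighbourhood $\mathcal{O}$ of $x_*$ with $F(x)\ge F(x_* )+\rho|x-x_*|$ for all $x\in\mathcal{O}\cap\Omega$. *)

theory Defs
  imports "HOL-Analysis.Analysis"
begin

definition contingent_cone :: "'a::real_normed_vector set \<Rightarrow> 'a \<Rightarrow> 'a set" where
  "contingent_cone C x = {h. \<exists>\<alpha> hs. (\<forall>n. \<alpha> n > 0) \<and> decseq \<alpha> \<and> \<alpha> \<longlonglongrightarrow> 0 \<and>
        hs \<longlonglongrightarrow> h \<and> (\<forall>n. x + \<alpha> n *\<^sub>R hs n \<in> C)}"

text \<open>Max function F(x) = max over W of f(x,w) (W compact, nonempty: the sup is attained).\<close>
definition maxfun :: "('a \<Rightarrow> 'w \<Rightarrow> real) \<Rightarrow> 'w set \<Rightarrow> 'a \<Rightarrow> real" where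
  "maxfun f Ws x = (SUP \<omega>\<in>Ws. f x \<omega>)"

definition active_set :: "('a \<Rightarrow> 'w \<Rightarrow> real) \<Rightarrow> 'w set \<Rightarrow> 'a \<Rightarrow> 'w set" where
  "active_set f Ws x = {\<omega> \<in> Ws. f x \<omega> = maxfun f Ws x}"

definition feasible_set :: "'a set \<Rightarrow> ('a \<Rightarrow> 'b) \<Rightarrow> 'b set \<Rightarrow> 'a set" where
  "feasible_set A G K = {x \<in> A. G x \<in> K}"

definition robinson_cq :: "'a::real_normed_vector set \<Rightarrow> ('a \<Rightarrow> 'b::real_normed_vector) \<Rightarrow> ('a \<Rightarrow>\<^sub>L 'b) \<Rightarrow> 'b set \<Rightarrow> 'a \<Rightarrow> bool" where
  "robinson_cq A G DGx K x \<longleftrightarrow>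
     0 \<in> interior {G x + blinfun_apply DGx (a - x) - k | a k. a \<in> A \<and> k \<in> K}"

definition first_order_growth ::
  "('a::real_normed_vector \<Rightarrow> real) \<Rightarrow> 'a set \<Rightarrow> 'a \<Rightarrow> bool" where
  "first_order_growth F \<Omega> x \<longleftrightarrow>
     (\<exists>\<rho>>0. \<exists>U. open U \<and> x \<in> U \<and> (\<forall>y \<in> U \<inter> \<Omega>. F y \<ge> F x + \<rho> * norm (y - x)))"

end

theory Submission
  imports Defs
begin

text \<open>Both directions compare \<open>F\<close> along feasible directions with Danskin's bound
  \<open>\<sigma>(h) = sup\<^bsub>\<omega>\<in>W(x\<^sub>*)\<^esub> \<langle>\<nabla>\<^sub>xf(x\<^sub>*,\<omega>), h\<rangle>\<close> for its directional derivative.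
  If growth fails, normalised secants to feasible points converge, by compactness of the unit sphere,
  to a nonzero direction \<open>h\<close> tangent to the feasible set along which every active \<open>\<omega>\<close> has
  \<open>\<langle>\<nabla>\<^sub>xf, h\<rangle> \<le> 0\<close>; and tangent directions of the feasible set always satisfy the linearized
  constraints. Conversely, Robinson's condition makes the constraint system metrically regular at
  \<open>x\<^sub>*\<close> (Baire and convexity for the linearized system, then minimisation of a penalty over a
  compact set), so every linearized direction is tangent to the feasible set, and growth with rate
  \<open>\<rho>\<close> along it gives \<open>\<sigma>(h) \<ge> \<rho>\<bar>h\<bar> > 0\<close>.\<close>

section \<open>Contingent cones\<close>

text \<open>The definition demands decreasing step sizes; a monotone subsequence supplies them.\<close>
lemma contingent_coneI:
  fixes C :: "'a::real_normed_vector set"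
  assumes pos: "\<And>n. \<alpha> n > 0" and lim: "\<alpha> \<longlonglongrightarrow> 0" and hl: "hs \<longlonglongrightarrow> h"
    and mem: "\<And>n. x + \<alpha> n *\<^sub>R hs n \<in> C"
  shows "h \<in> contingent_cone C x"
proof -
  obtain r where r: "strict_mono r" and mono: "monoseq (\<lambda>n. \<alpha> (r n))"
    using seq_monosub by blast
  have lim_r: "(\<lambda>n. \<alpha> (r n)) \<longlonglongrightarrow> 0"
    using LIMSEQ_subseq_LIMSEQ[OF lim r] by (simp add: o_def)
  have "\<not> incseq (\<lambda>n. \<alpha> (r n))"
  proof
    assume "incseq (\<lambda>n. \<alpha> (r n))"
    then have "\<alpha> (r 0) \<le> 0"
      using LIMSEQ_le_const[OF lim_r, of "\<alpha> (r 0)"] by (auto simp: incseq_def)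
    with pos show False by (meson not_le)
  qed
  then have "decseq (\<lambda>n. \<alpha> (r n))"
    using mono by (auto simp: monoseq_iff)
  moreover have "(\<lambda>n. hs (r n)) \<longlonglongrightarrow> h"
    using LIMSEQ_subseq_LIMSEQ[OF hl r] by (simp add: o_def)
  ultimately show ?thesis unfolding contingent_cone_def
    using pos lim_r mem by (intro CollectI exI[of _ "\<lambda>n. \<alpha> (r n)"] exI[of _ "\<lambda>n. hs (r n)"]) auto
qed

lemma contingent_cone_mono: "C \<subseteq> D \<Longrightarrow> contingent_cone C x \<subseteq> contingent_cone D x"
  unfolding contingent_cone_def by blast

lemma has_derivative_seq_quotient:
  fixes g :: "'a::real_normed_vector \<Rightarrow> 'b::real_normed_vector"
  assumes g: "(g has_derivative D) (at x)"
    and t: "\<And>n. t n > 0" "t \<longlonglongrightarrow> 0" and u: "u \<longlonglongrightarrow> v"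
  shows "(\<lambda>n. (1 / t n) *\<^sub>R (g (x + t n *\<^sub>R u n) - g x)) \<longlonglongrightarrow> D v"
proof -
  define \<psi> where "\<psi> = (\<lambda>k. norm (g (x + k) - g x - D k) / norm k)"
  have lin: "linear D"
    using g by (simp add: has_derivative_at bounded_linear.linear)
  have "isCont \<psi> 0"
    using g by (simp add: has_derivative_at isCont_def \<psi>_def)
  moreover have "(\<lambda>n. t n *\<^sub>R u n) \<longlonglongrightarrow> 0"
    using tendsto_scaleR[OF t(2) u] by simp
  ultimately have "(\<lambda>n. \<psi> (t n *\<^sub>R u n)) \<longlonglongrightarrow> \<psi> 0"
    by (rule isCont_tendsto_compose)
  then have "(\<lambda>n. \<psi> (t n *\<^sub>R u n)) \<longlonglongrightarrow> 0"
    by (simp add: \<psi>_def)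
  then have "(\<lambda>n. norm (u n) * \<psi> (t n *\<^sub>R u n)) \<longlonglongrightarrow> norm v * 0"
    by (intro tendsto_intros u)
  moreover have remainder: "norm ((1 / t n) *\<^sub>R (g (x + t n *\<^sub>R u n) - g x) - D (u n))
      = norm (u n) * \<psi> (t n *\<^sub>R u n)" for n
  proof -
    have "(1 / t n) *\<^sub>R (g (x + t n *\<^sub>R u n) - g x) - D (u n)
        = (1 / t n) *\<^sub>R (g (x + t n *\<^sub>R u n) - g x - D (t n *\<^sub>R u n))"
      using t(1)[of n] by (simp add: linear.scaleR[OF lin] algebra_simps)
    then show ?thesis
      using t(1)[of n] linear_0[OF lin] by (cases "u n = 0") (auto simp: \<psi>_def)
  qed
  ultimately have "(\<lambda>n. norm ((1 / t n) *\<^sub>R (g (x + t n *\<^sub>R u n) - g x) - D (u n))) \<longlonglongrightarrow> 0"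
    by (simp only: remainder mult_zero_right)
  then have "(\<lambda>n. (1 / t n) *\<^sub>R (g (x + t n *\<^sub>R u n) - g x) - D (u n)) \<longlonglongrightarrow> 0"
    by (rule tendsto_norm_zero_cancel)
  moreover have "(\<lambda>n. D (u n)) \<longlonglongrightarrow> D v"
    using g u by (simp add: has_derivative_at bounded_linear.tendsto)
  ultimately show ?thesis
    using tendsto_add by fastforce
qed

lemma contingent_cone_image_has_derivative:
  assumes g: "(g has_derivative D) (at x)" and h: "h \<in> contingent_cone C x"
  shows "D h \<in> contingent_cone (g ` C) (g x)"
proof -
  obtain \<alpha> hs where pos: "\<And>n. \<alpha> n > 0" and "\<alpha> \<longlonglongrightarrow> 0" "hs \<longlonglongrightarrow> h"
    and mem: "\<And>n. x + \<alpha> n *\<^sub>R hs n \<in> C"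
    using h unfolding contingent_cone_def by blast
  then have "(\<lambda>n. (1 / \<alpha> n) *\<^sub>R (g (x + \<alpha> n *\<^sub>R hs n) - g x)) \<longlonglongrightarrow> D h"
    using has_derivative_seq_quotient[OF g] by blast
  moreover have "g x + \<alpha> n *\<^sub>R ((1 / \<alpha> n) *\<^sub>R (g (x + \<alpha> n *\<^sub>R hs n) - g x)) \<in> g ` C" for n
    using pos[of n] mem[of n] by simp
  ultimately show ?thesis
    by (rule contingent_coneI[OF pos \<open>\<alpha> \<longlonglongrightarrow> 0\<close>])
qed

lemma convex_contingent_cone_approx:
  fixes C :: "'a::real_normed_vector set"
  assumes C: "convex C" "x \<in> C" and h: "h \<in> contingent_cone C x" and e: "e > 0"
  obtains \<tau> where "\<tau> > 0" "\<And>t. 0 < t \<Longrightarrow> t \<le> \<tau> \<Longrightarrow> \<exists>c\<in>C. norm (c - (x + t *\<^sub>R h)) \<le> e * t"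
proof -
  obtain \<alpha> hs where pos: "\<forall>n. \<alpha> n > 0" and "hs \<longlonglongrightarrow> h" and mem: "\<forall>n. x + \<alpha> n *\<^sub>R hs n \<in> C"
    using h unfolding contingent_cone_def by blast
  then obtain n where n: "norm (hs n - h) < e"
    using e unfolding lim_sequentially dist_norm by blast
  have "\<exists>c\<in>C. norm (c - (x + t *\<^sub>R h)) \<le> e * t" if t: "0 < t" "t \<le> \<alpha> n" for t
  proof
    have "x + t *\<^sub>R hs n = (1 - t / \<alpha> n) *\<^sub>R x + (t / \<alpha> n) *\<^sub>R (x + \<alpha> n *\<^sub>R hs n)"
      using pos[rule_format, of n] by (simp add: algebra_simps)
    then show "x + t *\<^sub>R hs n \<in> C"
      using convexD_alt[OF C mem[rule_format, of n], of "t / \<alpha> n"] pos t by simp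
    have "norm (x + t *\<^sub>R hs n - (x + t *\<^sub>R h)) = t * norm (hs n - h)"
      using t by (simp flip: scaleR_diff_right)
    then show "norm (x + t *\<^sub>R hs n - (x + t *\<^sub>R h)) \<le> e * t"
      using n t by simp
  qed
  then show ?thesis
    using that pos by blast
qed

lemma convex_contingent_cones_common_steps:
  fixes C :: "'a::real_normed_vector set" and D :: "'b::real_normed_vector set"
  assumes C: "convex C" "x \<in> C" "h \<in> contingent_cone C x"
    and D: "convex D" "y \<in> D" "k \<in> contingent_cone D y"
  obtains t c d where "\<And>n. t n > 0" "t \<longlonglongrightarrow> 0" "\<And>n. c n \<in> C" "\<And>n. d n \<in> D"
    "(\<lambda>n. (1 / t n) *\<^sub>R (c n - x)) \<longlonglongrightarrow> h" "(\<lambda>n. (1 / t n) *\<^sub>R (d n - y)) \<longlonglongrightarrow> k"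
proof -
  have "\<exists>t c d. 0 < t \<and> t \<le> \<epsilon> \<and> c \<in> C \<and> d \<in> D \<and>
      norm (c - (x + t *\<^sub>R h)) \<le> \<epsilon> * t \<and> norm (d - (y + t *\<^sub>R k)) \<le> \<epsilon> * t"
    if e: "\<epsilon> > 0" for \<epsilon>
  proof -
    obtain \<tau>1 where "\<tau>1 > 0" and \<tau>1: "\<And>t. 0 < t \<Longrightarrow> t \<le> \<tau>1 \<Longrightarrow> \<exists>c\<in>C. norm (c - (x + t *\<^sub>R h)) \<le> \<epsilon> * t"
      using convex_contingent_cone_approx[OF C e] by blast
    obtain \<tau>2 where "\<tau>2 > 0" and \<tau>2: "\<And>t. 0 < t \<Longrightarrow> t \<le> \<tau>2 \<Longrightarrow> \<exists>d\<in>D. norm (d - (y + t *\<^sub>R k)) \<le> \<epsilon> * t"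
      using convex_contingent_cone_approx[OF D e] by blast
    define t where "t = min \<epsilon> (min \<tau>1 \<tau>2)"
    have "0 < t" "t \<le> \<epsilon>" "t \<le> \<tau>1" "t \<le> \<tau>2"
      using e \<open>\<tau>1 > 0\<close> \<open>\<tau>2 > 0\<close> by (auto simp: t_def)
    with \<tau>1 \<tau>2 show ?thesis
      by blast
  qed
  then have "\<forall>n. \<exists>t c d. 0 < t \<and> t \<le> inverse (Suc n) \<and> c \<in> C \<and> d \<in> D \<and>
      norm (c - (x + t *\<^sub>R h)) \<le> inverse (Suc n) * t \<and> norm (d - (y + t *\<^sub>R k)) \<le> inverse (Suc n) * t"
    by simp
  then obtain t c d where "\<forall>n. 0 < t n \<and> t n \<le> inverse (Suc n) \<and> c n \<in> C \<and> d n \<in> D \<and>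
      norm (c n - (x + t n *\<^sub>R h)) \<le> inverse (Suc n) * t n \<and>
      norm (d n - (y + t n *\<^sub>R k)) \<le> inverse (Suc n) * t n"
    by metis
  then have t: "\<And>n. 0 < t n" "\<And>n. t n \<le> inverse (Suc n)"
    and cd: "\<And>n. c n \<in> C" "\<And>n. d n \<in> D"
    and c: "\<And>n. norm (c n - (x + t n *\<^sub>R h)) \<le> inverse (Suc n) * t n"
    and d: "\<And>n. norm (d n - (y + t n *\<^sub>R k)) \<le> inverse (Suc n) * t n"
    by auto
  have "t \<longlonglongrightarrow> 0"
    using t by (intro tendsto_sandwich[OF always_eventually always_eventually tendsto_const
          LIMSEQ_inverse_real_of_nat]) (auto intro: less_imp_le)
  have quotient: "(\<lambda>n. (1 / t n) *\<^sub>R (z n - p)) \<longlonglongrightarrow> w"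
    if z: "\<And>n. norm (z n - (p + t n *\<^sub>R w)) \<le> inverse (Suc n) * t n" for z p w
  proof -
    have "norm ((1 / t n) *\<^sub>R (z n - p) - w) \<le> inverse (Suc n)" for n
    proof -
      have "(1 / t n) *\<^sub>R (z n - p) - w = (1 / t n) *\<^sub>R (z n - (p + t n *\<^sub>R w))"
        using t(1)[of n] by (simp add: algebra_simps)
      then have "norm ((1 / t n) *\<^sub>R (z n - p) - w) = norm (z n - (p + t n *\<^sub>R w)) / t n"
        using t(1)[of n] by simp
      also have "\<dots> \<le> inverse (Suc n) * t n / t n"
        using z[of n] t(1)[of n] by (intro divide_right_mono) auto
      finally show ?thesis
        using t(1)[of n] by simp
    qed
    then have "(\<lambda>n. (1 / t n) *\<^sub>R (z n - p) - w) \<longlonglongrightarrow> 0"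
      by (intro Lim_null_comparison[OF always_eventually LIMSEQ_inverse_real_of_nat]) auto
    then show ?thesis
      by (rule LIM_zero_cancel)
  qed
  show ?thesis
    using that[OF t(1) \<open>t \<longlonglongrightarrow> 0\<close> cd quotient[OF c] quotient[OF d]] .
qed

section \<open>Max functions\<close>

lemma continuous_on_slice:
  assumes "continuous_on (UNIV \<times> Ws) (\<lambda>(x, \<omega>). f x \<omega>)"
  shows "continuous_on Ws (f y)"
proof -
  have "continuous_on Ws ((\<lambda>(x, \<omega>). f x \<omega>) \<circ> Pair y)"
    by (rule continuous_on_compose[OF _ continuous_on_subset[OF assms]])
      (auto intro!: continuous_intros)
  then show ?thesis
    by (simp add: o_def)
qed

text \<open>Where \<open>\<phi> \<ge> \<sigma> + e\<close>, compactness keeps \<open>g\<close> boundedly below its maximum \<open>c\<close>.\<close>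
lemma compact_perturbation_le:
  fixes g \<phi> :: "'w::topological_space \<Rightarrow> real"
  assumes Ws: "compact Ws" and cont: "continuous_on Ws g" "continuous_on Ws \<phi>"
    and le: "\<And>\<omega>. \<omega> \<in> Ws \<Longrightarrow> g \<omega> \<le> c"
    and active: "\<And>\<omega>. \<omega> \<in> Ws \<Longrightarrow> g \<omega> = c \<Longrightarrow> \<phi> \<omega> \<le> \<sigma>"
    and e: "e > 0"
  shows "\<exists>\<tau>>0. \<forall>t \<omega>. 0 < t \<and> t < \<tau> \<and> \<omega> \<in> Ws \<longrightarrow> g \<omega> + t * \<phi> \<omega> \<le> c + t * (\<sigma> + e)"
proof (cases "\<exists>\<omega>\<in>Ws. \<phi> \<omega> \<ge> \<sigma> + e")
  case False
  have "g \<omega> + t * \<phi> \<omega> \<le> c + t * (\<sigma> + e)" if "0 < t" "\<omega> \<in> Ws" for t \<omega>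
  proof -
    have "t * \<phi> \<omega> \<le> t * (\<sigma> + e)"
      using False that by (intro mult_left_mono) auto
    then show ?thesis
      using le[OF that(2)] by linarith
  qed
  then show ?thesis
    using zero_less_one by blast
next
  case True
  define V where "V = {\<omega> \<in> Ws. \<phi> \<omega> \<ge> \<sigma> + e}"
  have "closedin (top_of_set Ws) V"
    using continuous_closedin_preimage[OF cont(2) closed_atLeast[of "\<sigma> + e"]]
    by (simp add: V_def vimage_def Int_def conj_commute)
  then have "compact V"
    using closedin_compact Ws by blast
  moreover have "V \<noteq> {}"
    using True by (auto simp: V_def)
  ultimately obtain w0 where w0: "w0 \<in> V" and max: "\<And>\<omega>. \<omega> \<in> V \<Longrightarrow> g \<omega> \<le> g w0"
    using continuous_attains_sup[OF _ _ continuous_on_subset[OF cont(1)]] by (metis V_def mem_Collect_eq subsetI)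
  have "g w0 < c"
    using le[of w0] active[of w0] w0 e by (force simp: V_def)
  obtain B where B: "\<And>\<omega>. \<omega> \<in> Ws \<Longrightarrow> \<phi> \<omega> \<le> B"
    using compact_imp_bounded[OF compact_continuous_image[OF cont(2) Ws]]
    by (meson bounded_imp_bdd_above bdd_above.E imageI)
  define \<tau> where "\<tau> = (c - g w0) / (\<bar>B - (\<sigma> + e)\<bar> + 1)"
  have "\<tau> > 0"
    using \<open>g w0 < c\<close> by (simp add: \<tau>_def)
  moreover have "g \<omega> + t * \<phi> \<omega> \<le> c + t * (\<sigma> + e)" if t: "0 < t" "t < \<tau>" and \<omega>: "\<omega> \<in> Ws" for t \<omega>
  proof (cases "\<omega> \<in> V")
    case True
    have "t * (\<phi> \<omega> - (\<sigma> + e)) \<le> t * (\<bar>B - (\<sigma> + e)\<bar> + 1)"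
      using B[OF \<omega>] t by (intro mult_left_mono) auto
    also have "\<dots> \<le> \<tau> * (\<bar>B - (\<sigma> + e)\<bar> + 1)"
      using t by (intro mult_right_mono) auto
    also have "\<dots> = c - g w0"
      by (simp add: \<tau>_def)
    finally show ?thesis
      using max[OF True] by (simp add: algebra_simps)
  next
    case False
    then have "t * \<phi> \<omega> \<le> t * (\<sigma> + e)"
      using \<omega> t by (intro mult_left_mono) (auto simp: V_def)
    then show ?thesis
      using le[OF \<omega>] by linarith
  qed
  ultimately show ?thesis
    by blast
qed

locale max_function =
  fixes f :: "'a::real_inner \<Rightarrow> 'w::topological_space \<Rightarrow> real"
    and fx :: "'a \<Rightarrow> 'w \<Rightarrow> 'a"
    and Ws :: "'w set"
  assumes compact: "compact Ws" and nonempty: "Ws \<noteq> {}"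
    and f_diff: "\<And>x \<omega>. \<omega> \<in> Ws \<Longrightarrow> ((\<lambda>y. f y \<omega>) has_derivative (\<lambda>h. fx x \<omega> \<bullet> h)) (at x)"
    and f_cont: "continuous_on (UNIV \<times> Ws) (\<lambda>(x, \<omega>). f x \<omega>)"
    and fx_cont: "continuous_on (UNIV \<times> Ws) (\<lambda>(x, \<omega>). fx x \<omega>)"
begin

lemma bdd_above_slice: "bdd_above (f y ` Ws)"
  using compact_continuous_image[OF continuous_on_slice[OF f_cont] compact]
  by (intro bounded_imp_bdd_above compact_imp_bounded)

lemma maxfun_upper: "\<omega> \<in> Ws \<Longrightarrow> f y \<omega> \<le> maxfun f Ws y"
  unfolding maxfun_def by (rule cSUP_upper[OF _ bdd_above_slice])

lemma maxfun_least:
  assumes "\<And>\<omega>. \<omega> \<in> Ws \<Longrightarrow> f y \<omega> \<le> c"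
  shows "maxfun f Ws y \<le> c"
  unfolding maxfun_def using nonempty assms by (rule cSUP_least)

lemma active_set_nonempty: "active_set f Ws y \<noteq> {}"
proof -
  obtain \<omega> where "\<omega> \<in> Ws" "\<And>\<omega>'. \<omega>' \<in> Ws \<Longrightarrow> f y \<omega>' \<le> f y \<omega>"
    using continuous_attains_sup[OF compact nonempty continuous_on_slice[OF f_cont]] by blast
  then have "f y \<omega> = maxfun f Ws y"
    using maxfun_upper maxfun_least by (meson order.antisym)
  with \<open>\<omega> \<in> Ws\<close> show ?thesis
    by (auto simp: active_set_def)
qed

lemma fx_bounded: obtains M where "M > 0" "\<And>\<omega>. \<omega> \<in> Ws \<Longrightarrow> norm (fx y \<omega>) \<le> M"
proof -
  have "bounded (fx y ` Ws)"
    using compact_continuous_image[OF continuous_on_slice[OF fx_cont] compact] by (rule compact_imp_bounded)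
  then obtain M where "\<And>\<omega>. \<omega> \<in> Ws \<Longrightarrow> norm (fx y \<omega>) \<le> M"
    unfolding bounded_iff by blast
  then show ?thesis
    using that[of "\<bar>M\<bar> + 1"] by force
qed

lemma directional_SUP_upper:
  assumes "\<omega> \<in> active_set f Ws y"
  shows "fx y \<omega> \<bullet> h \<le> (SUP \<omega>\<in>active_set f Ws y. fx y \<omega> \<bullet> h)"
proof (rule cSUP_upper[OF assms])
  obtain M where "\<And>\<omega>. \<omega> \<in> Ws \<Longrightarrow> norm (fx y \<omega>) \<le> M"
    using fx_bounded by blast
  then have bound: "fx y \<omega> \<bullet> h \<le> M * norm h" if "\<omega> \<in> active_set f Ws y" for \<omega>
    using that norm_cauchy_schwarz[of "fx y \<omega>" h]
    by (force simp: active_set_def intro: order_trans mult_right_mono)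
  show "bdd_above ((\<lambda>\<omega>. fx y \<omega> \<bullet> h) ` active_set f Ws y)"
    by (rule bdd_aboveI2[OF bound])
qed

lemma uniform_linearization:
  assumes e: "e > 0"
  obtains d where "d > 0"
    "\<And>y \<omega>. norm (y - x) < d \<Longrightarrow> \<omega> \<in> Ws \<Longrightarrow> \<bar>f y \<omega> - f x \<omega> - fx x \<omega> \<bullet> (y - x)\<bar> \<le> e * norm (y - x)"
proof -
  obtain X where "x \<in> X" "open X" and X: "\<forall>y\<in>X \<inter> UNIV. \<forall>\<omega>\<in>Ws. dist (fx y \<omega>) (fx x \<omega>) \<le> e"
    using continuous_on_prod_compactE[OF fx_cont compact UNIV_I e, of x] by auto
  then obtain d where d: "d > 0" "ball x d \<subseteq> X"
    using open_contains_ball by blast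
  have "\<bar>f y \<omega> - f x \<omega> - fx x \<omega> \<bullet> (y - x)\<bar> \<le> e * norm (y - x)"
    if y: "norm (y - x) < d" and \<omega>: "\<omega> \<in> Ws" for y \<omega>
  proof -
    have "norm (f y \<omega> - f x \<omega> - fx x \<omega> \<bullet> (y - x)) \<le> norm (y - x) * e"
    proof (rule differentiable_bound_linearization[where S = "ball x d" and f' = "\<lambda>z h. fx z \<omega> \<bullet> h"])
      show "x + t *\<^sub>R (y - x) \<in> ball x d" if "t \<in> {0..1}" for t
        using that y mult_left_le_one_le[of "norm (y - x)" t] by (simp add: dist_norm)
      show "((\<lambda>y. f y \<omega>) has_derivative (\<lambda>h. fx z \<omega> \<bullet> h)) (at z within ball x d)" for z
        using f_diff[OF \<omega>] by (rule has_derivative_at_withinI)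
      show "onorm ((\<lambda>h. fx z \<omega> \<bullet> h) - (\<lambda>h. fx x \<omega> \<bullet> h)) \<le> e" if "z \<in> ball x d" for z
      proof (rule onorm_bound)
        show "0 \<le> e"
          using e by simp
        fix h
        have "norm (((\<lambda>h. fx z \<omega> \<bullet> h) - (\<lambda>h. fx x \<omega> \<bullet> h)) h) \<le> norm (fx z \<omega> - fx x \<omega>) * norm h"
          using Cauchy_Schwarz_ineq2[of "fx z \<omega> - fx x \<omega>" h] by (simp add: inner_diff_left)
        also have "\<dots> \<le> e * norm h"
          using X \<omega> that d by (intro mult_right_mono) (auto simp: dist_norm)
        finally show "norm (((\<lambda>h. fx z \<omega> \<bullet> h) - (\<lambda>h. fx x \<omega> \<bullet> h)) h) \<le> e * norm h" .
      qed
    qed (use d in auto)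
    then show ?thesis
      by (simp add: mult.commute)
  qed
  with d show ?thesis
    using that by blast
qed

lemma uniform_directional_linearization:
  assumes e: "e > 0"
  obtains d where "d > 0" "\<And>t v \<omega>. 0 < t \<Longrightarrow> t < d \<Longrightarrow> norm (v - h) < d \<Longrightarrow> \<omega> \<in> Ws \<Longrightarrow>
      f (x + t *\<^sub>R v) \<omega> \<le> f x \<omega> + t * (fx x \<omega> \<bullet> h) + t * e"
proof -
  define \<epsilon> where "\<epsilon> = e / 2"
  have \<epsilon>: "\<epsilon> > 0" and h1: "norm h + 1 > 0"
    using e by (simp_all add: \<epsilon>_def add_nonneg_pos)
  obtain M where M: "M > 0" "\<And>\<omega>. \<omega> \<in> Ws \<Longrightarrow> norm (fx x \<omega>) \<le> M"
    using fx_bounded by blast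
  have "\<epsilon> / (norm h + 1) > 0"
    using \<epsilon> h1 by simp
  then obtain d0 where "d0 > 0" and d0: "\<And>y \<omega>. norm (y - x) < d0 \<Longrightarrow> \<omega> \<in> Ws \<Longrightarrow>
      \<bar>f y \<omega> - f x \<omega> - fx x \<omega> \<bullet> (y - x)\<bar> \<le> \<epsilon> / (norm h + 1) * norm (y - x)"
    using uniform_linearization[where x = x] by blast
  define d where "d = min 1 (min (\<epsilon> / M) (d0 / (norm h + 1)))"
  have "d > 0"
    using \<epsilon> M \<open>d0 > 0\<close> h1 by (simp add: d_def)
  moreover have "f (x + t *\<^sub>R v) \<omega> \<le> f x \<omega> + t * (fx x \<omega> \<bullet> h) + t * e"
    if t: "0 < t" "t < d" and v: "norm (v - h) < d" and \<omega>: "\<omega> \<in> Ws" for t v \<omega>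
  proof -
    have "norm v \<le> norm h + 1"
      using v norm_triangle_sub[of v h] by (simp add: d_def)
    then have tv: "t * norm v \<le> t * (norm h + 1)"
      using t by (intro mult_left_mono) auto
    also have "\<dots> < d0"
      using t h1 by (simp add: d_def less_divide_eq)
    finally have "f (x + t *\<^sub>R v) \<omega> \<le> f x \<omega> + t * (fx x \<omega> \<bullet> v) + \<epsilon> / (norm h + 1) * (t * norm v)"
      using d0[of "x + t *\<^sub>R v" \<omega>] \<omega> t by auto
    also have "\<epsilon> / (norm h + 1) * (t * norm v) \<le> t * \<epsilon>"
    proof -
      have "\<epsilon> / (norm h + 1) * (t * norm v) \<le> \<epsilon> / (norm h + 1) * (t * (norm h + 1))"
        using \<epsilon> h1 by (intro mult_left_mono[OF tv]) simp
      then show ?thesis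
        using h1 by (simp add: mult.commute)
    qed
    also have "fx x \<omega> \<bullet> v = fx x \<omega> \<bullet> h + fx x \<omega> \<bullet> (v - h)"
      by (simp add: inner_diff_right)
    also have "fx x \<omega> \<bullet> (v - h) \<le> \<epsilon>"
    proof -
      have "fx x \<omega> \<bullet> (v - h) \<le> M * norm (v - h)"
        using norm_cauchy_schwarz[of "fx x \<omega>" "v - h"] M(2)[OF \<omega>] by (smt (verit) mult_right_mono norm_ge_zero)
      also have "\<dots> \<le> \<epsilon>"
        using v M by (simp add: d_def less_divide_eq mult.commute)
      finally show ?thesis .
    qed
    finally show ?thesis
      using t by (simp add: \<epsilon>_def algebra_simps)
  qed
  ultimately show ?thesis
    using that by blast
qed

text \<open>The upper half of Danskin's theorem.\<close>
lemma maxfun_directional_upper: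
  assumes e: "e > 0"
  obtains \<delta> where "\<delta> > 0" "\<And>t v. 0 < t \<Longrightarrow> t < \<delta> \<Longrightarrow> norm (v - h) < \<delta> \<Longrightarrow>
      maxfun f Ws (x + t *\<^sub>R v) \<le> maxfun f Ws x + t * ((SUP \<omega>\<in>active_set f Ws x. fx x \<omega> \<bullet> h) + e)"
proof -
  let ?\<sigma> = "SUP \<omega>\<in>active_set f Ws x. fx x \<omega> \<bullet> h"
  have e2: "e / 2 > 0"
    using e by simp
  have cont: "continuous_on Ws (\<lambda>\<omega>. fx x \<omega> \<bullet> h)"
    using continuous_on_slice[OF fx_cont] by (intro continuous_intros)
  have active: "fx x \<omega> \<bullet> h \<le> ?\<sigma>" if "\<omega> \<in> Ws" "f x \<omega> = maxfun f Ws x" for \<omega>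
    using that directional_SUP_upper by (simp add: active_set_def)
  have "\<exists>\<tau>>0. \<forall>t \<omega>. 0 < t \<and> t < \<tau> \<and> \<omega> \<in> Ws \<longrightarrow>
      f x \<omega> + t * (fx x \<omega> \<bullet> h) \<le> maxfun f Ws x + t * (?\<sigma> + e / 2)"
    by (rule compact_perturbation_le[OF compact continuous_on_slice[OF f_cont] cont])
      (use maxfun_upper active e2 in auto)
  then obtain \<tau> where "\<tau> > 0" and \<tau>: "\<And>t \<omega>. 0 < t \<Longrightarrow> t < \<tau> \<Longrightarrow> \<omega> \<in> Ws \<Longrightarrow>
      f x \<omega> + t * (fx x \<omega> \<bullet> h) \<le> maxfun f Ws x + t * (?\<sigma> + e / 2)"
    by blast
  obtain d where "d > 0" and d: "\<And>t v \<omega>. 0 < t \<Longrightarrow> t < d \<Longrightarrow> norm (v - h) < d \<Longrightarrow> \<omega> \<in> Ws \<Longrightarrow>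
      f (x + t *\<^sub>R v) \<omega> \<le> f x \<omega> + t * (fx x \<omega> \<bullet> h) + t * (e / 2)"
    using uniform_directional_linearization[OF e2, where x = x and h = h] by blast
  have "min \<tau> d > 0"
    using \<open>\<tau> > 0\<close> \<open>d > 0\<close> by simp
  moreover have "maxfun f Ws (x + t *\<^sub>R v) \<le> maxfun f Ws x + t * (?\<sigma> + e)"
    if t: "0 < t" "t < min \<tau> d" and v: "norm (v - h) < min \<tau> d" for t v
  proof (rule maxfun_least)
    fix \<omega> assume \<omega>: "\<omega> \<in> Ws"
    show "f (x + t *\<^sub>R v) \<omega> \<le> maxfun f Ws x + t * (?\<sigma> + e)"
      using d[of t v \<omega>] \<tau>[of t \<omega>] t v \<omega> by (simp add: algebra_simps)
  qed
  ultimately show ?thesis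
    by (rule that)
qed

lemma active_directional_nonpos:
  assumes \<omega>: "\<omega> \<in> active_set f Ws x"
    and \<alpha>: "\<And>n. \<alpha> n > 0" "\<alpha> \<longlonglongrightarrow> 0" and hs: "hs \<longlonglongrightarrow> h" and \<epsilon>: "\<epsilon> \<longlonglongrightarrow> 0"
    and le: "\<And>n. maxfun f Ws (x + \<alpha> n *\<^sub>R hs n) \<le> maxfun f Ws x + \<alpha> n * \<epsilon> n"
  shows "fx x \<omega> \<bullet> h \<le> 0"
proof -
  have \<omega>': "\<omega> \<in> Ws" "f x \<omega> = maxfun f Ws x"
    using \<omega> by (auto simp: active_set_def)
  have "(\<lambda>n. (1 / \<alpha> n) *\<^sub>R (f (x + \<alpha> n *\<^sub>R hs n) \<omega> - f x \<omega>)) \<longlonglongrightarrow> fx x \<omega> \<bullet> h"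
    using has_derivative_seq_quotient[OF f_diff[OF \<omega>'(1)] \<alpha> hs] .
  moreover have "(1 / \<alpha> n) *\<^sub>R (f (x + \<alpha> n *\<^sub>R hs n) \<omega> - f x \<omega>) \<le> \<epsilon> n" for n
  proof -
    have "f (x + \<alpha> n *\<^sub>R hs n) \<omega> - f x \<omega> \<le> \<alpha> n * \<epsilon> n"
      using maxfun_upper[OF \<omega>'(1), of "x + \<alpha> n *\<^sub>R hs n"] le[of n] \<omega>'(2) by simp
    then show ?thesis
      using \<alpha>(1)[of n] by (simp add: divide_simps mult.commute)
  qed
  ultimately show ?thesis
    using LIMSEQ_le[OF _ \<epsilon>] by auto
qed

lemma first_order_growth_imp_directional_SUP_pos:
  assumes growth: "first_order_growth (maxfun f Ws) \<Omega> x"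
    and h: "h \<in> contingent_cone \<Omega> x" "h \<noteq> 0"
  shows "(SUP \<omega>\<in>active_set f Ws x. fx x \<omega> \<bullet> h) > 0"
proof -
  define \<sigma> where "\<sigma> = (SUP \<omega>\<in>active_set f Ws x. fx x \<omega> \<bullet> h)"
  obtain \<rho> U where "\<rho> > 0" "open U" "x \<in> U"
    and grow: "\<And>y. y \<in> U \<inter> \<Omega> \<Longrightarrow> maxfun f Ws y \<ge> maxfun f Ws x + \<rho> * norm (y - x)"
    using growth unfolding first_order_growth_def by blast
  obtain \<alpha> hs where \<alpha>: "\<And>n. \<alpha> n > 0" "\<alpha> \<longlonglongrightarrow> 0" and hs: "hs \<longlonglongrightarrow> h"
    and mem: "\<And>n. x + \<alpha> n *\<^sub>R hs n \<in> \<Omega>"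
    using h(1) unfolding contingent_cone_def by blast
  have "\<rho> * norm h \<le> \<sigma> + e" if e: "e > 0" for e
  proof -
    obtain \<delta> where "\<delta> > 0" and \<delta>: "\<And>t v. 0 < t \<Longrightarrow> t < \<delta> \<Longrightarrow> norm (v - h) < \<delta> \<Longrightarrow>
        maxfun f Ws (x + t *\<^sub>R v) \<le> maxfun f Ws x + t * (\<sigma> + e)"
      using maxfun_directional_upper[OF e] unfolding \<sigma>_def by blast
    have "(\<lambda>n. x + \<alpha> n *\<^sub>R hs n) \<longlonglongrightarrow> x + 0 *\<^sub>R h"
      using \<alpha>(2) hs by (intro tendsto_intros)
    then have "eventually (\<lambda>n. x + \<alpha> n *\<^sub>R hs n \<in> U) sequentially"
      using \<open>open U\<close> \<open>x \<in> U\<close> by (simp add: topological_tendstoD)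
    moreover have "eventually (\<lambda>n. \<alpha> n < \<delta>) sequentially"
      using order_tendstoD(2)[OF \<alpha>(2) \<open>\<delta> > 0\<close>] .
    moreover have "eventually (\<lambda>n. norm (hs n - h) < \<delta>) sequentially"
      using hs \<open>\<delta> > 0\<close> by (simp add: tendsto_iff dist_norm)
    ultimately have "eventually (\<lambda>n. \<rho> * norm (hs n) \<le> \<sigma> + e) sequentially"
    proof eventually_elim
      case (elim n)
      have "maxfun f Ws x + \<rho> * norm (\<alpha> n *\<^sub>R hs n) \<le> maxfun f Ws (x + \<alpha> n *\<^sub>R hs n)"
        using grow[of "x + \<alpha> n *\<^sub>R hs n"] elim(1) mem[of n] by simp
      also have "\<dots> \<le> maxfun f Ws x + \<alpha> n * (\<sigma> + e)"
        using \<delta>[OF \<alpha>(1) elim(2) elim(3)] .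
      finally have "\<alpha> n * (\<rho> * norm (hs n)) \<le> \<alpha> n * (\<sigma> + e)"
        using \<alpha>(1)[of n] by (simp add: algebra_simps)
      then show ?case
        using \<alpha>(1)[of n] by simp
    qed
    moreover have "(\<lambda>n. \<rho> * norm (hs n)) \<longlonglongrightarrow> \<rho> * norm h"
      using hs by (intro tendsto_intros)
    ultimately show ?thesis
      by (simp add: Lim_bounded2 LIMSEQ_le_const2 tendsto_upperbound)
  qed
  then have "\<rho> * norm h \<le> \<sigma>"
    by (rule field_le_epsilon)
  moreover have "\<rho> * norm h > 0"
    using \<open>\<rho> > 0\<close> h(2) by simp
  ultimately show ?thesis
    by (simp add: \<sigma>_def)
qed

end

lemma not_first_order_growth_seq:
  fixes F :: "'a::euclidean_space \<Rightarrow> real"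
  assumes "\<not> first_order_growth F \<Omega> x"
  obtains \<alpha> hs h \<epsilon> where "\<And>n. \<alpha> n > 0" "\<alpha> \<longlonglongrightarrow> 0" "hs \<longlonglongrightarrow> h" "h \<noteq> 0" "\<epsilon> \<longlonglongrightarrow> 0"
    "\<And>n. x + \<alpha> n *\<^sub>R hs n \<in> \<Omega>" "\<And>n. F (x + \<alpha> n *\<^sub>R hs n) \<le> F x + \<alpha> n * \<epsilon> n"
proof -
  have "\<exists>y. y \<in> ball x (inverse (Suc n)) \<and> y \<in> \<Omega> \<and> F y < F x + inverse (Suc n) * norm (y - x)" for n
  proof -
    have "inverse (real (Suc n)) > 0"
      by simp
    then have "\<not> (\<forall>y\<in>ball x (inverse (Suc n)) \<inter> \<Omega>. F x + inverse (Suc n) * norm (y - x) \<le> F y)"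
      using assms unfolding first_order_growth_def by (metis centre_in_ball open_ball)
    then show ?thesis
      by (auto simp: not_le)
  qed
  then obtain y where y: "\<And>n. y n \<in> ball x (inverse (Suc n))" "\<And>n. y n \<in> \<Omega>"
    and Fy: "\<And>n. F (y n) < F x + inverse (Suc n) * norm (y n - x)"
    by metis
  define t where "t n = norm (y n - x)" for n
  have t: "t n > 0" for n
    using Fy[of n] by (auto simp: t_def)
  have "t \<longlonglongrightarrow> 0"
    using y(1) by (intro tendsto_sandwich[OF always_eventually always_eventually tendsto_const
          LIMSEQ_inverse_real_of_nat]) (auto simp: t_def dist_norm norm_minus_commute intro: less_imp_le)
  define u where "u n = (1 / t n) *\<^sub>R (y n - x)" for n
  have "u n \<in> sphere 0 1" for n
    using t[of n] by (simp add: u_def t_def)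
  then obtain h r where "h \<in> sphere 0 1" "strict_mono r" and "(u \<circ> r) \<longlonglongrightarrow> h"
    using compact_imp_seq_compact[OF compact_sphere] unfolding seq_compact_def by metis
  show ?thesis
  proof
    show "t (r n) > 0" for n
      using t by simp
    show "(\<lambda>n. t (r n)) \<longlonglongrightarrow> 0"
      using LIMSEQ_subseq_LIMSEQ[OF \<open>t \<longlonglongrightarrow> 0\<close> \<open>strict_mono r\<close>] by (simp add: o_def)
    show "(\<lambda>n. u (r n)) \<longlonglongrightarrow> h"
      using \<open>(u \<circ> r) \<longlonglongrightarrow> h\<close> by (simp add: o_def)
    show "h \<noteq> 0"
      using \<open>h \<in> sphere 0 1\<close> by auto
    show "(\<lambda>n. inverse (Suc (r n))) \<longlonglongrightarrow> 0"
      using LIMSEQ_subseq_LIMSEQ[OF LIMSEQ_inverse_real_of_nat \<open>strict_mono r\<close>] by (simp add: o_def)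
    have y_eq: "x + t (r n) *\<^sub>R u (r n) = y (r n)" for n
      using t[of "r n"] by (simp add: u_def)
    show "x + t (r n) *\<^sub>R u (r n) \<in> \<Omega>" for n
      using y(2) by (simp add: y_eq)
    show "F (x + t (r n) *\<^sub>R u (r n)) \<le> F x + t (r n) * inverse (Suc (r n))" for n
      using Fy[of "r n"] unfolding y_eq by (simp add: t_def mult.commute)
  qed
qed

lemma first_order_growth_if_directional_SUP_pos:
  fixes f :: "'a::euclidean_space \<Rightarrow> 'w::topological_space \<Rightarrow> real"
  assumes "max_function f fx Ws"
    and pos: "\<And>h. h \<in> contingent_cone \<Omega> x \<Longrightarrow> h \<noteq> 0 \<Longrightarrow> (SUP \<omega>\<in>active_set f Ws x. fx x \<omega> \<bullet> h) > 0"
  shows "first_order_growth (maxfun f Ws) \<Omega> x"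
proof (rule ccontr)
  interpret max_function f fx Ws
    by fact
  assume "\<not> first_order_growth (maxfun f Ws) \<Omega> x"
  then show False
  proof (rule not_first_order_growth_seq)
    fix \<alpha> hs h \<epsilon>
    assume \<alpha>: "\<And>n. \<alpha> n > 0" "\<alpha> \<longlonglongrightarrow> 0" and hs: "hs \<longlonglongrightarrow> h" "h \<noteq> 0"
      and \<epsilon>: "\<epsilon> \<longlonglongrightarrow> 0" and mem: "\<And>n. x + \<alpha> n *\<^sub>R hs n \<in> \<Omega>"
      and le: "\<And>n. maxfun f Ws (x + \<alpha> n *\<^sub>R hs n) \<le> maxfun f Ws x + \<alpha> n * \<epsilon> n"
    have "(SUP \<omega>\<in>active_set f Ws x. fx x \<omega> \<bullet> h) \<le> 0"
      using active_set_nonempty active_directional_nonpos[OF _ \<alpha> hs(1) \<epsilon> le] by (rule cSUP_least)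
    moreover have "h \<in> contingent_cone \<Omega> x"
      using \<alpha> hs(1) mem by (rule contingent_coneI)
    ultimately show False
      using pos hs(2) by fastforce
  qed
qed

section \<open>Robinson's constraint qualification\<close>

lemma contingent_cone_feasible_set_linearized:
  assumes G: "(G has_derivative D) (at x)" and h: "h \<in> contingent_cone (feasible_set A G K) x"
  shows "h \<in> contingent_cone A x" "D h \<in> contingent_cone K (G x)"
proof -
  show "h \<in> contingent_cone A x"
    using h contingent_cone_mono[of "feasible_set A G K" A] by (auto simp: feasible_set_def)
  have "D h \<in> contingent_cone (G ` feasible_set A G K) (G x)"
    by (rule contingent_cone_image_has_derivative[OF G h])
  then show "D h \<in> contingent_cone K (G x)"
    using contingent_cone_mono[of "G ` feasible_set A G K" K] by (auto simp: feasible_set_def)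
qed

definition linearized_range ::
  "'a::real_normed_vector set \<Rightarrow> 'b::real_normed_vector set \<Rightarrow> ('a \<Rightarrow>\<^sub>L 'b) \<Rightarrow> 'b \<Rightarrow> 'a \<Rightarrow> real \<Rightarrow> 'b set"
  where "linearized_range A K L g x N =
    {g + L (a - x) - k | a k. a \<in> A \<and> norm (a - x) \<le> N \<and> k \<in> K \<and> norm k \<le> N}"

lemma linearized_range_mono: "N \<le> M \<Longrightarrow> linearized_range A K L g x N \<subseteq> linearized_range A K L g x M"
  unfolding linearized_range_def by fastforce

lemma linearized_range_eq_image:
  "linearized_range A K L g x N =
    (\<lambda>(a, k). g + L (a - x) - k) ` ((A \<inter> cball x N) \<times> (K \<inter> cball 0 N))"
  unfolding linearized_range_def by (force simp: dist_norm norm_minus_commute)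

lemma convex_linearized_range:
  assumes "convex A" "convex K"
  shows "convex (linearized_range A K L g x N)"
proof -
  have "linearized_range A K L g x N =
      (+) (g - L x) ` ((\<lambda>(a, k). L a - k) ` ((A \<inter> cball x N) \<times> (K \<inter> cball 0 N)))"
    unfolding linearized_range_eq_image image_image
    by (intro image_cong) (auto simp: blinfun.diff_right)
  moreover have "linear (\<lambda>(a, k). L a - k)"
    by (auto intro!: linearI simp: blinfun.add_right blinfun.scaleR_right algebra_simps)
  ultimately show ?thesis
    using assms by (simp add: convex_translation convex_linear_image convex_Times convex_Int)
qed

lemma closed_linearized_range:
  fixes A :: "'a::{heine_borel,real_normed_vector} set"
  assumes "closed A" "closed K"
  shows "closed (linearized_range A K L g x N)"
proof -
  let ?P = "(\<lambda>a. g + L (a - x)) ` (A \<inter> cball x N)"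
  have "compact ?P"
    using assms(1) by (intro compact_continuous_image closed_Int_compact continuous_intros) auto
  then have "closed (\<Union>p\<in>?P. \<Union>k\<in>K \<inter> cball 0 N. {p - k})"
    using assms(2) by (intro compact_closed_differences closed_Int closed_cball)
  moreover have "linearized_range A K L g x N = (\<Union>p\<in>?P. \<Union>k\<in>K \<inter> cball 0 N. {p - k})"
    unfolding linearized_range_def by (auto simp: dist_norm norm_minus_commute) blast
  ultimately show ?thesis
    by simp
qed

lemma convex_ball_subset_of_opposite:
  fixes S :: "'a::real_normed_vector set"
  assumes "convex S" "ball y \<delta> \<subseteq> S" "- (\<mu> *\<^sub>R y) \<in> S" "\<mu> > 0"
  shows "ball 0 (\<mu> * \<delta> / (1 + \<mu>)) \<subseteq> S"
proof
  fix z :: 'a assume z: "z \<in> ball 0 (\<mu> * \<delta> / (1 + \<mu>))"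
  define p where "p = y + ((1 + \<mu>) / \<mu>) *\<^sub>R z"
  have "dist y p = ((1 + \<mu>) / \<mu>) * norm z"
    using assms(4) by (simp add: p_def dist_norm)
  also have "\<dots> < \<delta>"
    using z assms(4) by (simp add: field_simps)
  finally have "p \<in> S"
    using assms(2) by auto
  then have "(\<mu> / (1 + \<mu>)) *\<^sub>R p + (1 / (1 + \<mu>)) *\<^sub>R (- (\<mu> *\<^sub>R y)) \<in> S"
    using assms(4) by (intro convexD[OF assms(1) _ assms(3)]) (auto simp: add_divide_distrib[symmetric])
  moreover have "\<mu> + \<mu> * \<mu> > 0"
    using assms(4) by (intro add_pos_pos mult_pos_pos)
  then have "(\<mu> / (1 + \<mu>)) *\<^sub>R p + (1 / (1 + \<mu>)) *\<^sub>R (- (\<mu> *\<^sub>R y)) = z"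
    using assms(4) by (simp add: p_def algebra_simps divide_simps)
  ultimately show "z \<in> S"
    by metis
qed

lemma range_subset_linearized_ranges:
  fixes L :: "'a::real_normed_vector \<Rightarrow>\<^sub>L 'b::real_normed_vector"
  shows "{g + L (a - x) - k | a k. a \<in> A \<and> k \<in> K} \<subseteq> (\<Union>n. linearized_range A K L g x (real n))"
proof
  fix y assume "y \<in> {g + L (a - x) - k | a k. a \<in> A \<and> k \<in> K}"
  then obtain a k where ak: "y = g + L (a - x) - k" "a \<in> A" "k \<in> K"
    by blast
  obtain n where "norm (a - x) + norm k \<le> real n"
    using real_arch_simple by blast
  then have "y \<in> linearized_range A K L g x (real n)"
    unfolding linearized_range_def using ak norm_ge_zero[of "a - x"] norm_ge_zero[of k]
    by (intro CollectI exI[of _ a] exI[of _ k]) (auto simp del: norm_ge_zero)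
  then show "y \<in> (\<Union>n. linearized_range A K L g x (real n))"
    by blast
qed

lemma robinson_cq_interior_linearized_range:
  fixes A :: "'a::euclidean_space set" and K :: "'b::banach set"
  assumes "closed A" "closed K" and "robinson_cq A G L K x"
  obtains n where "interior (linearized_range A K L (G x) x (real n)) \<noteq> {}"
proof -
  let ?D = "\<lambda>n::nat. linearized_range A K L (G x) x (real n)"
  have "0 \<in> interior (\<Union> (range ?D))"
    using assms(3) interior_mono[OF range_subset_linearized_ranges] unfolding robinson_cq_def by blast
  moreover have "euclidean interior_of \<Union> (range ?D) = {}" if "\<And>n. interior (?D n) = {}"
    using that by (intro Baire_category_alt) (auto simp: completely_metrizable_space_euclidean
        closed_linearized_range[OF assms(1,2)] simp flip: closed_closedin)
  ultimately show ?thesis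
    using that by fastforce
qed

text \<open>By Baire one truncation of the range has interior, and convexity recentres it at \<open>0\<close>.\<close>
lemma robinson_cq_ball_subset_linearized_range:
  fixes A :: "'a::euclidean_space set" and K :: "'b::banach set"
  assumes A: "closed A" "convex A" and K: "closed K" "convex K"
    and rob: "robinson_cq A G L K x"
  obtains N \<eta> where "N \<ge> 0" "\<eta> > 0" "ball 0 \<eta> \<subseteq> linearized_range A K L (G x) x N"
proof -
  let ?D = "\<lambda>n::nat. linearized_range A K L (G x) x (real n)"
  obtain n y \<delta> where "\<delta> > 0" "ball y \<delta> \<subseteq> ?D n"
    using robinson_cq_interior_linearized_range[OF A(1) K(1) rob] by (meson ex_in_conv mem_interior)
  obtain \<epsilon> where "\<epsilon> > 0" and \<epsilon>: "ball 0 \<epsilon> \<subseteq> {G x + L (a - x) - k | a k. a \<in> A \<and> k \<in> K}"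
    using rob mem_interior unfolding robinson_cq_def by blast
  define \<mu> where "\<mu> = \<epsilon> / (2 * (norm y + 1))"
  have "\<mu> > 0"
    using \<open>\<epsilon> > 0\<close> by (simp add: \<mu>_def add_nonneg_pos)
  have "norm y / (2 * (norm y + 1)) < 1"
    by (simp add: pos_divide_less_eq add_nonneg_pos)
  then have "\<epsilon> * (norm y / (2 * (norm y + 1))) < \<epsilon> * 1"
    using \<open>\<epsilon> > 0\<close> by (rule mult_strict_left_mono)
  moreover have "norm (- (\<mu> *\<^sub>R y)) = \<epsilon> * (norm y / (2 * (norm y + 1)))"
    using \<open>\<mu> > 0\<close> \<open>\<epsilon> > 0\<close> by (simp add: \<mu>_def)
  ultimately have "- (\<mu> *\<^sub>R y) \<in> ball 0 \<epsilon>"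
    by simp
  then obtain m where "- (\<mu> *\<^sub>R y) \<in> ?D m"
    using \<epsilon> range_subset_linearized_ranges by blast
  define N where "N = max (real n) (real m)"
  have "?D n \<subseteq> linearized_range A K L (G x) x N" "?D m \<subseteq> linearized_range A K L (G x) x N"
    by (auto intro!: linearized_range_mono simp: N_def)
  then have "ball 0 (\<mu> * \<delta> / (1 + \<mu>)) \<subseteq> linearized_range A K L (G x) x N"
    using \<open>ball y \<delta> \<subseteq> ?D n\<close> \<open>- (\<mu> *\<^sub>R y) \<in> ?D m\<close> \<open>\<mu> > 0\<close>
    by (intro convex_ball_subset_of_opposite convex_linearized_range A(2) K(2)) auto
  moreover have "\<mu> * \<delta> / (1 + \<mu>) > 0" "N \<ge> 0"
    using \<open>\<mu> > 0\<close> \<open>\<delta> > 0\<close> by (simp_all add: N_def)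
  ultimately show ?thesis
    using that by blast
qed

lemma linearized_range_solvable_near:
  fixes A :: "'a::real_normed_vector set" and K :: "'b::real_normed_vector set"
  assumes A: "convex A" and K: "convex K"
    and ball: "ball 0 \<eta> \<subseteq> linearized_range A K L g x N" and "\<eta> > 0"
    and a0: "a0 \<in> A" "norm (a0 - x) \<le> 1" and k0: "k0 \<in> K"
    and y0: "norm (g + L (a0 - x) - k0) < \<eta> / 2"
    and y: "norm (y - (g + L (a0 - x) - k0)) < \<eta> / 2"
  obtains a k where "a \<in> A" "k \<in> K" "g + L (a - x) - k = y"
    "norm (a - a0) \<le> 2 * (N + 1) / \<eta> * norm (y - (g + L (a0 - x) - k0))"
proof -
  define y0 where "y0 = g + L (a0 - x) - k0"
  consider "y = y0" | "y \<noteq> y0" by blast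
  then show ?thesis
  proof cases
    case 1
    then show ?thesis
      using that[OF a0(1) k0] by (simp add: y0_def)
  next
    case 2
    define s where "s = 2 * norm (y - y0) / \<eta>"
    have s: "0 < s" "s < 1"
      using 2 y \<open>\<eta> > 0\<close> by (auto simp: s_def y0_def)
    define z where "z = y0 + (1 / s) *\<^sub>R (y - y0)"
    have "norm z \<le> norm y0 + (1 / s) * norm (y - y0)"
      unfolding z_def using s norm_triangle_ineq[of y0 "(1 / s) *\<^sub>R (y - y0)"] by simp
    also have "(1 / s) * norm (y - y0) = \<eta> / 2"
      using 2 \<open>\<eta> > 0\<close> by (simp add: s_def)
    finally have "z \<in> linearized_range A K L g x N"
      using ball y0 by (auto simp: y0_def)
    then obtain az kz where z: "z = g + L (az - x) - kz" "az \<in> A" "norm (az - x) \<le> N" "kz \<in> K"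
      unfolding linearized_range_def by blast
    define a where "a = (1 - s) *\<^sub>R a0 + s *\<^sub>R az"
    define k where "k = (1 - s) *\<^sub>R k0 + s *\<^sub>R kz"
    have "a \<in> A" "k \<in> K"
      unfolding a_def k_def using convexD_alt[OF A a0(1) z(2)] convexD_alt[OF K k0 z(4)] s by auto
    moreover have "g + L (a - x) - k = (1 - s) *\<^sub>R y0 + s *\<^sub>R z"
    proof -
      have "a - x = (1 - s) *\<^sub>R (a0 - x) + s *\<^sub>R (az - x)"
        by (simp add: a_def algebra_simps)
      then have "L (a - x) = (1 - s) *\<^sub>R L (a0 - x) + s *\<^sub>R L (az - x)"
        by (simp add: blinfun.add_right blinfun.scaleR_right)
      then show ?thesis
        unfolding y0_def z(1) k_def by (simp add: algebra_simps)
    qed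
    moreover have "(1 - s) *\<^sub>R y0 + s *\<^sub>R z = y"
      using s by (simp add: z_def algebra_simps)
    moreover have "norm (a - a0) \<le> 2 * (N + 1) / \<eta> * norm (y - y0)"
    proof -
      have "a - a0 = s *\<^sub>R ((az - x) - (a0 - x))"
        by (simp add: a_def algebra_simps)
      then have "norm (a - a0) \<le> s * (norm (az - x) + norm (a0 - x))"
        using s norm_triangle_ineq4[of "az - x" "a0 - x"] by (simp add: mult_left_mono)
      also have "\<dots> \<le> s * (N + 1)"
        using s z(3) a0(2) by (intro mult_left_mono) auto
      also have "\<dots> = 2 * (N + 1) / \<eta> * norm (y - y0)"
        by (simp add: s_def)
      finally show ?thesis .
    qed
    ultimately show ?thesis
      using that y0_def by blast
  qed
qed

lemma robinson_linear_correction: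
  fixes A :: "'a::euclidean_space set" and K :: "'b::banach set"
  assumes A: "closed A" "convex A" and K: "closed K" "convex K"
    and G: "continuous (at x0) G" and rob: "robinson_cq A G L K x0"
  obtains c r where "c > 0" "r > 0"
    "\<And>x k. x \<in> A \<Longrightarrow> k \<in> K \<Longrightarrow> norm (x - x0) < r \<Longrightarrow> norm (G x - k) < r \<Longrightarrow>
      \<exists>x'\<in>A. G x + L (x' - x) \<in> K \<and> norm (x' - x) \<le> c * norm (G x - k)"
proof -
  obtain N \<eta> where "N \<ge> 0" "\<eta> > 0" and ball: "ball 0 \<eta> \<subseteq> linearized_range A K L (G x0) x0 N"
    using robinson_cq_ball_subset_linearized_range[OF A K rob] by blast
  define c where "c = 2 * (N + 1) / \<eta>"
  have "\<eta> / 8 > 0"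
    using \<open>\<eta> > 0\<close> by simp
  then obtain r0 where "r0 > 0" and r0: "\<And>x. dist x x0 < r0 \<Longrightarrow> dist (G x) (G x0) < \<eta> / 8"
    using G unfolding continuous_at_eps_delta by blast
  define r where "r = min 1 (min (\<eta> / 8) (min r0 (\<eta> / (8 * (norm L + 1)))))"
  have "c > 0" "r > 0"
    using \<open>\<eta> > 0\<close> \<open>N \<ge> 0\<close> \<open>r0 > 0\<close> by (simp_all add: c_def r_def add_nonneg_pos)
  moreover have "\<exists>x'\<in>A. G x + L (x' - x) \<in> K \<and> norm (x' - x) \<le> c * norm (G x - k)"
    if x: "x \<in> A" "norm (x - x0) < r" and k: "k \<in> K" "norm (G x - k) < r" for x k
  proof -
    have "norm (L (x - x0)) \<le> norm L * norm (x - x0)"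
      by (rule norm_blinfun)
    also have "\<dots> \<le> (norm L + 1) * norm (x - x0)"
      by (simp add: distrib_right)
    also have "\<dots> \<le> \<eta> / 8"
    proof -
      have "norm L + 1 > 0"
        by (simp add: add_nonneg_pos)
      then have "norm (x - x0) * (8 * (norm L + 1)) < \<eta>"
        using x(2) by (simp add: r_def pos_less_divide_eq)
      then show ?thesis
        by (simp add: algebra_simps)
    qed
    finally have "norm (G x0 - G x + L (x - x0)) < \<eta> / 4"
      using r0[of x] x(2) norm_triangle_ineq[of "G x0 - G x" "L (x - x0)"]
      by (simp add: r_def dist_norm norm_minus_commute)
    moreover have "norm (G x - k) < \<eta> / 8"
      using k(2) by (simp add: r_def)
    moreover have "norm (G x0 + L (x - x0) - k) \<le> norm (G x0 - G x + L (x - x0)) + norm (G x - k)"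
      using norm_triangle_ineq[of "G x0 - G x + L (x - x0)" "G x - k"] by (simp add: algebra_simps)
    ultimately have base: "norm (G x0 + L (x - x0) - k) < \<eta> / 2"
      using \<open>\<eta> > 0\<close> by linarith
    have target: "norm ((G x0 + L (x - x0) - G x) - (G x0 + L (x - x0) - k)) < \<eta> / 2"
      using k(2) \<open>\<eta> > 0\<close> by (simp add: r_def norm_minus_commute)
    have "norm (x - x0) \<le> 1"
      using x(2) by (simp add: r_def)
    then obtain a' k' where "a' \<in> A" "k' \<in> K"
      and eq: "G x0 + L (a' - x0) - k' = G x0 + L (x - x0) - G x"
      and "norm (a' - x) \<le> c * norm ((G x0 + L (x - x0) - G x) - (G x0 + L (x - x0) - k))"
      using linearized_range_solvable_near[OF A(2) K(2) ball \<open>\<eta> > 0\<close> x(1) _ k(1) base target]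
      unfolding c_def by blast
    moreover have "G x + L (a' - x) = k'"
      using eq by (simp add: blinfun.diff_right algebra_simps)
    ultimately show ?thesis
      by (auto simp: norm_minus_commute)
  qed
  ultimately show ?thesis
    using that by blast
qed

lemma continuous_derivative_strict_linearization:
  fixes G :: "'a::real_normed_vector \<Rightarrow> 'b::real_normed_vector"
  assumes G: "\<And>x. (G has_derivative blinfun_apply (DG x)) (at x)" and DG: "isCont DG x0" and "e > 0"
  obtains \<rho> where "\<rho> > 0" "\<And>x x'. norm (x - x0) < \<rho> \<Longrightarrow> norm (x' - x0) < \<rho> \<Longrightarrow>
    norm (G x' - G x - DG x0 (x' - x)) \<le> e * norm (x' - x)"
proof -
  obtain \<rho> where "\<rho> > 0" and \<rho>: "\<And>x. dist x x0 < \<rho> \<Longrightarrow> dist (DG x) (DG x0) < e"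
    using DG \<open>e > 0\<close> unfolding continuous_at_eps_delta by blast
  have "norm (G x' - G x - DG x0 (x' - x)) \<le> e * norm (x' - x)"
    if "norm (x - x0) < \<rho>" "norm (x' - x0) < \<rho>" for x x'
    unfolding mult.commute[of e]
  proof (rule differentiable_bound_linearization[where S = "ball x0 \<rho>" and f' = "\<lambda>x. blinfun_apply (DG x)"])
    show "x + t *\<^sub>R (x' - x) \<in> ball x0 \<rho>" if "t \<in> {0..1}" for t
    proof -
      have "x + t *\<^sub>R (x' - x) = (1 - t) *\<^sub>R x + t *\<^sub>R x'"
        by (simp add: algebra_simps)
      then show ?thesis
        using convexD_alt[OF convex_ball, of x x0 \<rho> x' t] \<open>norm (x - x0) < \<rho>\<close> \<open>norm (x' - x0) < \<rho>\<close> that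
        by (simp add: dist_norm norm_minus_commute)
    qed
    show "(G has_derivative blinfun_apply (DG y)) (at y within ball x0 \<rho>)" for y
      using G by (rule has_derivative_at_withinI)
    show "onorm (blinfun_apply (DG y) - blinfun_apply (DG x0)) \<le> e" if "y \<in> ball x0 \<rho>" for y
    proof -
      have "onorm (blinfun_apply (DG y) - blinfun_apply (DG x0)) = norm (DG y - DG x0)"
        by (simp add: norm_blinfun.rep_eq fun_diff_def minus_blinfun.rep_eq)
      then show ?thesis
        using \<rho>[of y] that by (simp add: dist_norm norm_minus_commute)
    qed
  qed (use \<open>\<rho> > 0\<close> in auto)
  with \<open>\<rho> > 0\<close> show ?thesis
    using that by blast
qed

lemma infdist_lessE:
  assumes "A \<noteq> {}" "infdist x A < e"
  obtains a where "a \<in> A" "dist x a < e"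
proof -
  have "(INF a\<in>A. dist x a) < e"
    using assms by (simp add: infdist_notempty)
  then show ?thesis
    using that cINF_less_iff[OF assms(1) bdd_belowI2[of A 0 "dist x"]] by auto
qed

lemma correction_decreases_penalty:
  fixes K :: "'b::real_normed_vector set"
  assumes c: "c > 0" and pos: "infdist (G xb) K > 0"
    and step: "G xb + L (x' - xb) \<in> K" "norm (x' - xb) \<le> 2 * c * infdist (G xb) K"
    and lin: "norm (G x' - G xb - L (x' - xb)) \<le> norm (x' - xb) / (8 * c)"
  shows "infdist (G x') K + norm (x' - a) / (8 * c) < infdist (G xb) K + norm (xb - a) / (8 * c)"
proof -
  have "infdist (G x') K \<le> norm (x' - xb) / (8 * c)"
    using infdist_le[OF step(1), of "G x'"] lin by (simp add: dist_norm algebra_simps)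
  moreover have "norm (x' - a) / (8 * c) \<le> norm (x' - xb) / (8 * c) + norm (xb - a) / (8 * c)"
    using norm_triangle_ineq[of "x' - xb" "xb - a"] c by (simp add: add_divide_distrib[symmetric] divide_right_mono)
  moreover have "norm (x' - xb) / (8 * c) \<le> infdist (G xb) K / 4"
    using step(2) c by (simp add: divide_simps mult.commute mult.left_commute)
  ultimately show ?thesis
    using pos by linarith
qed

lemma correction_step_at_infeasible_point:
  fixes K :: "'b::real_normed_vector set"
  assumes c: "c > 0" and pos: "infdist (G x) K > 0"
    and x: "x \<in> A" "norm (x - x0) < r" "2 * infdist (G x) K < r"
    and correction: "\<And>x k. x \<in> A \<Longrightarrow> k \<in> K \<Longrightarrow> norm (x - x0) < r \<Longrightarrow> norm (G x - k) < r \<Longrightarrow>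
      \<exists>x'\<in>A. G x + L (x' - x) \<in> K \<and> norm (x' - x) \<le> c * norm (G x - k)"
  obtains x' where "x' \<in> A" "G x + L (x' - x) \<in> K" "norm (x' - x) \<le> 2 * c * infdist (G x) K"
proof -
  have "K \<noteq> {}"
    using pos by (auto simp: infdist_def)
  then obtain k where "k \<in> K" and k: "norm (G x - k) < 2 * infdist (G x) K"
    using infdist_lessE[of K "G x" "2 * infdist (G x) K"] pos by (auto simp: dist_norm)
  then obtain x' where "x' \<in> A" "G x + L (x' - x) \<in> K" and "norm (x' - x) \<le> c * norm (G x - k)"
    using correction[of x k] x by force
  moreover have "c * norm (G x - k) \<le> c * (2 * infdist (G x) K)"
    using k c by (intro mult_left_mono) auto
  ultimately show ?thesis
    using that by simp
qed

text \<open>Minimising the penalty \<open>infdist (G x) K + \<parallel>x - a\<parallel> / (8 c)\<close> over a compact neighbourhood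
  of \<open>a\<close> in \<open>A\<close> (finite dimension is used here) produces a feasible point, since at an infeasible
  minimiser the correction step would decrease the penalty.\<close>
lemma metric_regularity_of_linear_correction:
  fixes A :: "'a::{heine_borel,real_normed_vector} set" and K :: "'b::real_normed_vector set"
  assumes A: "closed A" and K: "closed K" and G: "continuous_on UNIV G"
    and c: "c > 0" and "r > 0" "\<rho> > 0"
    and correction: "\<And>x k. x \<in> A \<Longrightarrow> k \<in> K \<Longrightarrow> norm (x - x0) < r \<Longrightarrow> norm (G x - k) < r \<Longrightarrow>
      \<exists>x'\<in>A. G x + L (x' - x) \<in> K \<and> norm (x' - x) \<le> c * norm (G x - k)"
    and linearization: "\<And>x x'. norm (x - x0) < \<rho> \<Longrightarrow> norm (x' - x0) < \<rho> \<Longrightarrow>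
      norm (G x' - G x - L (x' - x)) \<le> norm (x' - x) / (8 * c)"
  obtains s where "s > 0" "\<And>a k. a \<in> A \<Longrightarrow> k \<in> K \<Longrightarrow> norm (a - x0) < s \<Longrightarrow> norm (G a - k) < s \<Longrightarrow>
      \<exists>x\<in>A. G x \<in> K \<and> norm (x - a) \<le> 8 * c * norm (G a - k)"
proof -
  define R where "R = min r \<rho> / 2"
  define s where "s = min R (R / (10 * c))"
  have R: "R > 0" "2 * R \<le> r" "2 * R \<le> \<rho>"
    using \<open>r > 0\<close> \<open>\<rho> > 0\<close> by (auto simp: R_def)
  have s: "s > 0" "s \<le> R" "10 * c * s \<le> R"
    using R c by (auto simp: s_def min_def field_simps)
  have "\<exists>x\<in>A. G x \<in> K \<and> norm (x - a) \<le> 8 * c * norm (G a - k)"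
    if a: "a \<in> A" "norm (a - x0) < s" and k: "k \<in> K" "norm (G a - k) < s" for a k
  proof -
    define \<delta> where "\<delta> = norm (G a - k)"
    define \<psi> where "\<psi> x = infdist (G x) K + norm (x - a) / (8 * c)" for x
    let ?S = "A \<inter> cball a R"
    have "compact ?S"
      using A by (intro closed_Int_compact compact_cball)
    moreover have "a \<in> ?S"
      using a R by simp
    moreover have "continuous_on ?S \<psi>"
      unfolding \<psi>_def using continuous_on_subset[OF G] c by (intro continuous_intros) auto
    ultimately obtain xb where xb: "xb \<in> ?S" and min: "\<And>x. x \<in> ?S \<Longrightarrow> \<psi> xb \<le> \<psi> x"
      using continuous_attains_inf[of ?S \<psi>] by blast
    have "\<psi> xb \<le> \<delta>"
      using min[OF \<open>a \<in> ?S\<close>] infdist_le[OF k(1), of "G a"] by (simp add: \<psi>_def \<delta>_def dist_norm)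
    moreover have "norm (xb - a) / (8 * c) \<ge> 0"
      using c by simp
    ultimately have dist_xb: "infdist (G xb) K \<le> \<delta>" and "norm (xb - a) / (8 * c) \<le> \<delta>"
      using infdist_nonneg[of "G xb" K] unfolding \<psi>_def by linarith+
    then have xb_a: "norm (xb - a) \<le> 8 * c * \<delta>"
      using c by (simp add: pos_divide_le_eq mult_ac)
    have xb_x0: "norm (xb - x0) < 2 * R"
      using xb a(2) s norm_triangle_ineq[of "xb - a" "a - x0"] by (simp add: dist_norm norm_minus_commute)
    have "G xb \<in> K"
    proof (rule ccontr)
      assume "G xb \<notin> K"
      then have pos: "infdist (G xb) K > 0"
        using in_closed_iff_infdist_zero[OF K, of "G xb"] k(1) infdist_nonneg[of "G xb" K]
        by (auto simp: order_less_le)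
      moreover have "2 * infdist (G xb) K < r" "norm (xb - x0) < r"
        using dist_xb k(2) s R xb_x0 by (simp_all add: \<delta>_def)
      ultimately obtain x' where "x' \<in> A" and step: "G xb + L (x' - xb) \<in> K"
        and x'_xb: "norm (x' - xb) \<le> 2 * c * infdist (G xb) K"
        using correction_step_at_infeasible_point[OF c _ _ _ _ correction] xb by blast
      have "c * infdist (G xb) K \<le> c * \<delta>"
        using dist_xb c by (intro mult_left_mono) auto
      then have "norm (x' - a) \<le> 10 * c * \<delta>"
        using x'_xb xb_a norm_triangle_ineq[of "x' - xb" "xb - a"] by simp
      also have "\<dots> < 10 * c * s"
        using k(2) c by (simp add: \<delta>_def)
      also have "\<dots> \<le> R"
        using s by simp
      finally have "x' \<in> ?S" and "norm (x' - x0) < \<rho>"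
        using \<open>x' \<in> A\<close> a(2) s R norm_triangle_ineq[of "x' - a" "a - x0"] by (auto simp: dist_norm norm_minus_commute)
      moreover have "norm (xb - x0) < \<rho>"
        using xb_x0 R by linarith
      ultimately have "norm (G x' - G xb - L (x' - xb)) \<le> norm (x' - xb) / (8 * c)"
        by (intro linearization)
      then have "\<psi> x' < \<psi> xb"
        unfolding \<psi>_def by (rule correction_decreases_penalty[where G = G and L = L, OF c pos step x'_xb])
      with min[OF \<open>x' \<in> ?S\<close>] show False
        by simp
    qed
    then show ?thesis
      using xb xb_a by (auto simp: \<delta>_def)
  qed
  with s(1) show ?thesis
    using that by blast
qed

lemma robinson_metric_regularity:
  fixes A :: "'a::euclidean_space set" and K :: "'b::banach set"
  assumes A: "closed A" "convex A" and K: "closed K" "convex K"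
    and G: "\<And>x. (G has_derivative blinfun_apply (DG x)) (at x)" and DG: "isCont DG x0"
    and rob: "robinson_cq A G (DG x0) K x0"
  obtains C s where "C > 0" "s > 0" "\<And>a k. a \<in> A \<Longrightarrow> k \<in> K \<Longrightarrow> norm (a - x0) < s \<Longrightarrow>
      norm (G a - k) < s \<Longrightarrow> \<exists>x\<in>A. G x \<in> K \<and> norm (x - a) \<le> C * norm (G a - k)"
proof -
  have G_cont: "continuous_on UNIV G"
    using G has_derivative_continuous by (blast intro: continuous_at_imp_continuous_on)
  obtain c r where "c > 0" "r > 0" and correction: "\<And>x k. x \<in> A \<Longrightarrow> k \<in> K \<Longrightarrow> norm (x - x0) < r \<Longrightarrow>
      norm (G x - k) < r \<Longrightarrow> \<exists>x'\<in>A. G x + DG x0 (x' - x) \<in> K \<and> norm (x' - x) \<le> c * norm (G x - k)"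
    using robinson_linear_correction[OF A K _ rob] G_cont by (metis UNIV_I continuous_on_eq_continuous_at open_UNIV)
  have "1 / (8 * c) > 0"
    using \<open>c > 0\<close> by simp
  then obtain \<rho> where "\<rho> > 0" and \<rho>: "\<And>x x'. norm (x - x0) < \<rho> \<Longrightarrow> norm (x' - x0) < \<rho> \<Longrightarrow>
      norm (G x' - G x - DG x0 (x' - x)) \<le> 1 / (8 * c) * norm (x' - x)"
    using continuous_derivative_strict_linearization[OF G DG] by blast
  have lin: "norm (G x' - G x - DG x0 (x' - x)) \<le> norm (x' - x) / (8 * c)"
    if "norm (x - x0) < \<rho>" "norm (x' - x0) < \<rho>" for x x'
    using \<rho>[OF that] by simp
  obtain s where "s > 0" "\<And>a k. a \<in> A \<Longrightarrow> k \<in> K \<Longrightarrow> norm (a - x0) < s \<Longrightarrow> norm (G a - k) < s \<Longrightarrow>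
      \<exists>x\<in>A. G x \<in> K \<and> norm (x - a) \<le> 8 * c * norm (G a - k)"
    using metric_regularity_of_linear_correction[OF A(1) K(1) G_cont \<open>c > 0\<close> \<open>r > 0\<close> \<open>\<rho> > 0\<close>
        correction lin]
    by blast
  moreover have "8 * c > 0"
    using \<open>c > 0\<close> by simp
  ultimately show ?thesis
    using that by blast
qed

lemma contingent_coneI_approx:
  fixes C :: "'a::real_normed_vector set"
  assumes t: "\<And>n. t n > 0" "t \<longlonglongrightarrow> 0" and a: "(\<lambda>n. (1 / t n) *\<^sub>R (a n - x)) \<longlonglongrightarrow> h"
    and c: "\<And>n. c n \<in> C" "\<And>n. norm (c n - a n) \<le> t n * \<epsilon> n" and "\<epsilon> \<longlonglongrightarrow> 0"
  shows "h \<in> contingent_cone C x"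
proof (rule contingent_coneI[OF t])
  have bound: "norm ((1 / t n) *\<^sub>R (c n - x) - (1 / t n) *\<^sub>R (a n - x)) \<le> \<epsilon> n" for n
  proof -
    have "norm ((1 / t n) *\<^sub>R (c n - x) - (1 / t n) *\<^sub>R (a n - x)) = norm (c n - a n) / t n"
      using t(1)[of n] by (simp add: scaleR_diff_right[symmetric])
    also have "\<dots> \<le> \<epsilon> n"
      using c(2)[of n] t(1)[of n] by (simp add: pos_divide_le_eq mult.commute)
    finally show ?thesis .
  qed
  have "(\<lambda>n. (1 / t n) *\<^sub>R (c n - x) - (1 / t n) *\<^sub>R (a n - x)) \<longlonglongrightarrow> 0"
    using always_eventually[OF allI[OF bound]] \<open>\<epsilon> \<longlonglongrightarrow> 0\<close> by (rule Lim_null_comparison)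
  with a show "(\<lambda>n. (1 / t n) *\<^sub>R (c n - x)) \<longlonglongrightarrow> h"
    by (rule Lim_transform)
  show "x + t n *\<^sub>R ((1 / t n) *\<^sub>R (c n - x)) \<in> C" for n
    using t(1)[of n] c(1)[of n] by simp
qed

lemma linearized_direction_approximation:
  fixes A :: "'a::real_normed_vector set" and K :: "'b::real_normed_vector set"
  assumes A: "convex A" "x0 \<in> A" and K: "convex K" "G x0 \<in> K"
    and G: "(G has_derivative D) (at x0)"
    and h: "h \<in> contingent_cone A x0" "D h \<in> contingent_cone K (G x0)"
  obtains t a k where "\<And>n. t n > 0" "t \<longlonglongrightarrow> 0" "\<And>n. a n \<in> A" "\<And>n. k n \<in> K"
    "(\<lambda>n. (1 / t n) *\<^sub>R (a n - x0)) \<longlonglongrightarrow> h" "(\<lambda>n. (1 / t n) *\<^sub>R (G (a n) - k n)) \<longlonglongrightarrow> 0"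
proof -
  obtain t a k where t: "\<And>n. t n > 0" "t \<longlonglongrightarrow> 0" and ak: "\<And>n. a n \<in> A" "\<And>n. k n \<in> K"
    and u: "(\<lambda>n. (1 / t n) *\<^sub>R (a n - x0)) \<longlonglongrightarrow> h"
    and w: "(\<lambda>n. (1 / t n) *\<^sub>R (k n - G x0)) \<longlonglongrightarrow> D h"
    using convex_contingent_cones_common_steps[OF A h(1) K h(2)] by blast
  have a_eq: "x0 + t n *\<^sub>R ((1 / t n) *\<^sub>R (a n - x0)) = a n" for n
    using t(1)[of n] by simp
  have "(\<lambda>n. (1 / t n) *\<^sub>R (G (a n) - G x0)) \<longlonglongrightarrow> D h"
    using has_derivative_seq_quotient[OF G t u] unfolding a_eq .
  then have "(\<lambda>n. (1 / t n) *\<^sub>R (G (a n) - G x0) - (1 / t n) *\<^sub>R (k n - G x0)) \<longlonglongrightarrow> D h - D h"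
    using w by (rule tendsto_diff)
  then have "(\<lambda>n. (1 / t n) *\<^sub>R (G (a n) - k n)) \<longlonglongrightarrow> 0"
    by (simp add: algebra_simps flip: scaleR_diff_right)
  with t ak u show ?thesis
    using that by blast
qed

text \<open>Follow both contingent directions along common steps and restore feasibility by metric
  regularity, at a cost \<open>o(t)\<close>.\<close>
lemma robinson_linearized_cone_subset_contingent_cone:
  fixes A :: "'a::euclidean_space set" and K :: "'b::banach set"
  assumes A: "closed A" "convex A" and K: "closed K" "convex K"
    and G: "\<And>x. (G has_derivative blinfun_apply (DG x)) (at x)" and DG: "isCont DG x0"
    and x0: "x0 \<in> feasible_set A G K" and rob: "robinson_cq A G (DG x0) K x0"
    and h: "h \<in> contingent_cone A x0" "DG x0 h \<in> contingent_cone K (G x0)"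
  shows "h \<in> contingent_cone (feasible_set A G K) x0"
proof -
  obtain C s where "C > 0" "s > 0" and regular: "\<And>a k. a \<in> A \<Longrightarrow> k \<in> K \<Longrightarrow> norm (a - x0) < s \<Longrightarrow>
      norm (G a - k) < s \<Longrightarrow> \<exists>x\<in>A. G x \<in> K \<and> norm (x - a) \<le> C * norm (G a - k)"
    using robinson_metric_regularity[OF A K G DG rob] by blast
  have "x0 \<in> A" "G x0 \<in> K"
    using x0 by (auto simp: feasible_set_def)
  then obtain t a k where t: "\<And>n. t n > 0" "t \<longlonglongrightarrow> 0" and ak: "\<And>n. a n \<in> A" "\<And>n. k n \<in> K"
    and u: "(\<lambda>n. (1 / t n) *\<^sub>R (a n - x0)) \<longlonglongrightarrow> h" and q: "(\<lambda>n. (1 / t n) *\<^sub>R (G (a n) - k n)) \<longlonglongrightarrow> 0"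
    using linearized_direction_approximation[OF A(2) _ K(2) _ G h] by blast
  have "(\<lambda>n. x0 + t n *\<^sub>R ((1 / t n) *\<^sub>R (a n - x0)) - x0) \<longlonglongrightarrow> x0 + 0 *\<^sub>R h - x0"
    using t(2) u by (intro tendsto_intros)
  moreover have "(\<lambda>n. t n *\<^sub>R ((1 / t n) *\<^sub>R (G (a n) - k n))) \<longlonglongrightarrow> 0 *\<^sub>R 0"
    using t(2) q by (intro tendsto_intros)
  ultimately have "(\<lambda>n. a n - x0) \<longlonglongrightarrow> 0" "(\<lambda>n. G (a n) - k n) \<longlonglongrightarrow> 0"
    using t(1) by (simp_all add: less_imp_neq[symmetric])
  then have "eventually (\<lambda>n. norm (a n - x0) < s \<and> norm (G (a n) - k n) < s) sequentially"
    using \<open>s > 0\<close> by (intro eventually_conj order_tendstoD(2)[OF tendsto_norm_zero])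
  then obtain N where N: "\<And>n. n \<ge> N \<Longrightarrow> norm (a n - x0) < s \<and> norm (G (a n) - k n) < s"
    unfolding eventually_sequentially by blast
  have "\<exists>x. x \<in> feasible_set A G K \<and> norm (x - a (n + N)) \<le> C * norm (G (a (n + N)) - k (n + N))" for n
    using regular[OF ak(1) ak(2)] N[of "n + N"] by (auto simp: feasible_set_def)
  then obtain x where x: "\<And>n. x n \<in> feasible_set A G K"
    and near: "\<And>n. norm (x n - a (n + N)) \<le> C * norm (G (a (n + N)) - k (n + N))"
    by metis
  show ?thesis
  proof (rule contingent_coneI_approx[OF _ _ _ x])
    show "t (n + N) > 0" for n
      using t(1) by simp
    show "(\<lambda>n. t (n + N)) \<longlonglongrightarrow> 0" "(\<lambda>n. (1 / t (n + N)) *\<^sub>R (a (n + N) - x0)) \<longlonglongrightarrow> h"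
      using LIMSEQ_ignore_initial_segment[OF t(2)] LIMSEQ_ignore_initial_segment[OF u] by simp_all
    show "norm (x n - a (n + N)) \<le> t (n + N) * (C * norm ((1 / t (n + N)) *\<^sub>R (G (a (n + N)) - k (n + N))))" for n
      using near[of n] t(1)[of "n + N"] by simp
    show "(\<lambda>n. C * norm ((1 / t (n + N)) *\<^sub>R (G (a (n + N)) - k (n + N)))) \<longlonglongrightarrow> 0"
      using tendsto_mult_left[OF tendsto_norm[OF LIMSEQ_ignore_initial_segment[OF q, of N]], of C] by simp
  qed
qed

theorem theorem2:
  fixes A :: "'a::euclidean_space set"
    and K :: "'b::banach set"
    and Ws :: "'w::t2_space set"
    and f :: "'a \<Rightarrow> 'w \<Rightarrow> real"
    and fx :: "'a \<Rightarrow> 'w \<Rightarrow> 'a"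
    and G :: "'a \<Rightarrow> 'b"
    and DG :: "'a \<Rightarrow> ('a \<Rightarrow>\<^sub>L 'b)"
    and xs :: 'a
  assumes A_ne: "A \<noteq> {}" and A_closed: "closed A" and A_convex: "convex A"
    and K_ne: "K \<noteq> {}" and K_closed: "closed K" and K_convex: "convex K" and K_cone: "cone K"
    and W_ne: "Ws \<noteq> {}" and W_compact: "compact Ws"
    and f_diff: "\<And>x \<omega>. \<omega> \<in> Ws \<Longrightarrow> ((\<lambda>y. f y \<omega>) has_derivative (\<lambda>h. fx x \<omega> \<bullet> h)) (at x)"
    and f_cont: "continuous_on (UNIV \<times> Ws) (\<lambda>(x, \<omega>). f x \<omega>)"
    and fx_cont: "continuous_on (UNIV \<times> Ws) (\<lambda>(x, \<omega>). fx x \<omega>)"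
    and G_diff: "\<And>x. (G has_derivative blinfun_apply (DG x)) (at x)"
    and DG_cont: "continuous_on UNIV DG"
    and xs_feas: "xs \<in> feasible_set A G K"
  shows
    "((\<forall>h \<in> contingent_cone A xs - {0}.
         blinfun_apply (DG xs) h \<in> contingent_cone K (G xs) \<longrightarrow>
         (SUP \<omega>\<in>active_set f Ws xs. fx xs \<omega> \<bullet> h) > 0)
       \<longrightarrow> first_order_growth (maxfun f Ws) (feasible_set A G K) xs)
     \<and>
     ((first_order_growth (maxfun f Ws) (feasible_set A G K) xs \<and> robinson_cq A G (DG xs) K xs)
       \<longrightarrow> (\<forall>h \<in> contingent_cone A xs - {0}.
         blinfun_apply (DG xs) h \<in> contingent_cone K (G xs) \<longrightarrow>
         (SUP \<omega>\<in>active_set f Ws xs. fx xs \<omega> \<bullet> h) > 0))"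
proof -
  have max_fn: "max_function f fx Ws"
    using W_compact W_ne f_diff f_cont fx_cont by unfold_locales
  let ?\<Omega> = "feasible_set A G K"
  have "isCont DG xs"
    using DG_cont by (simp add: continuous_on_eq_continuous_at)
  note tangent = robinson_linearized_cone_subset_contingent_cone[OF A_closed A_convex K_closed K_convex
      G_diff this xs_feas]
  show ?thesis
    using first_order_growth_if_directional_SUP_pos[OF max_fn, of ?\<Omega> xs] tangent
      contingent_cone_feasible_set_linearized[OF G_diff]
      max_function.first_order_growth_imp_directional_SUP_pos[OF max_fn, of ?\<Omega> xs]
    by blast
qed

end
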